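(* In the Classified Reallocation algorithm (with power-of-two laxities), suppose a client $c_i$ is reallocated out of the big channel during the processing of an arrival (because its laxity satisfies $w_i<\tau/2$ after $\tau$ is updated). Let $n$ be the number of active clients at the time of this reallocation and $n'$ the number of active clients at the time of the last allocation of $c_i$ to the big channel. Then $n\ge 2n'$.
   Context: Model: discrete time; each client $c_i$ has arrival time, departure time and laxity $w_i$ (a power of $2$), and must transmit at least once in every $w_i$ consecutive time steps while active; one transmission per channel per time step. A reallocation is a change of the channel of a client. For $x>0$, $\lceil\lceil x\rceil\rceil$ denotes the smallest power of $2$ not smaller than $x$. Classified Reallocation algorithm. Channels: one \emph{big channel} (all its clients transmit with period $\tau/2$) and \emph{$w$-channels} for powers of two $w$ (clients transmit with period $w$; at most $w$ clients; \emph{full} when holding $w$). State: $n$ (active clients, initially $0$), threshold $\tau$ (initially $2$). Arrival of $c_i$: $n\leftarrow n+1$. If $2\lceil\lceil n\rceil\rceil>\tau$: $\tau\leftarrow 2\lceil\lceil n\rceil\rceil$; each big-channel client $c_j$ with $w_j<\tau/2$ is reallocated to the non-full $w_j$-channel of minimum load (a new one reserved if needed); remaining big-channel clients get period $\tau/2$. Then if $w_i\ge\tau$, $c_i$ goes to the big channel; otherwise to the non-full $w_i$-channel of minimum load (new one reserved if needed). Departure of $c_i$ from channel $c$: $n\leftarrow n-1$. If $c$ is not the big channel: release $c$ if empty; otherwise if some $w_i$-channel $c'\ne c$ is not full, move one client from $c'$ to $c$. Then if $2\lceil\lceil n\rceil\rceil<\tau$: $\tau\leftarrow 2\lceil\lceil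 n\rceil\rceil$, big-channel clients get period $\tau/2$, and every $w$-channel with $w>2\tau$ has all its clients reallocated to the big channel and is released. *)

theory Defs
  imports Main
begin

text \<open>Smallest power of two not smaller than x (convention: ceil2 0 = 1).\<close>
definition ceil2 :: "nat \<Rightarrow> nat" where
  "ceil2 x = (LEAST p. (\<exists>e. p = 2 ^ e) \<and> x \<le> p)"

datatype chan = Big | WCh nat nat

text \<open>Algorithm state: active clients, clients that have ever arrived, laxities,
  channel of each client, reserved w-channels, counter n, threshold tau.\<close>
record st =
  act :: "nat set"
  arrived :: "nat set"
  lax :: "nat \<Rightarrow> nat"
  loc :: "nat \<Rightarrow> chan"
  resv :: "chan set"
  cnt :: nat
  tau :: nat

datatype event = Arrive nat nat | Depart nat

definition init_state :: "st \<Rightarrow> bool" where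
  "init_state s \<longleftrightarrow> act s = {} \<and> arrived s = {} \<and> resv s = {} \<and> cnt s = 0 \<and> tau s = 2"

definition load :: "st \<Rightarrow> chan \<Rightarrow> nat" where
  "load s c = card {j \<in> act s. loc s j = c}"

definition nonfull :: "st \<Rightarrow> nat \<Rightarrow> chan \<Rightarrow> bool" where
  "nonfull s w c \<longleftrightarrow> (\<exists>k. c = WCh w k) \<and> c \<in> resv s \<and> load s c < w"

definition place_choice :: "st \<Rightarrow> nat \<Rightarrow> chan \<Rightarrow> bool" where
  "place_choice s w c \<longleftrightarrow>
     (nonfull s w c \<and> (\<forall>c'. nonfull s w c' \<longrightarrow> load s c \<le> load s c'))
     \<or> ((\<nexists>c'. nonfull s w c') \<and> (\<exists>k. c = WCh w k) \<and> c \<notin> resv s)"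

inductive realloc :: "nat \<Rightarrow> st \<Rightarrow> st \<Rightarrow> bool" where
  realloc_done: "(\<forall>j\<in>act s. loc s j = Big \<longrightarrow> \<not> lax s j < t div 2) \<Longrightarrow> realloc t s s"
| realloc_step: "j \<in> act s \<Longrightarrow> loc s j = Big \<Longrightarrow> lax s j < t div 2 \<Longrightarrow>
     place_choice s (lax s j) c \<Longrightarrow>
     realloc t (s\<lparr>loc := (loc s)(j := c), resv := insert c (resv s)\<rparr>) s' \<Longrightarrow>
     realloc t s s'"

text \<open>step s e s' out inb: processing event e leads from s to s'; out is the set of
  clients reallocated out of the big channel during this step, inb the set of clients
  allocated to the big channel during this step.\<close>
inductive step :: "st \<Rightarrow> event \<Rightarrow> st \<Rightarrow> nat set \<Rightarrow> nat set \<Rightarrow> bool" where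
  arrive: "i \<notin> arrived s \<Longrightarrow> w = 2 ^ e \<Longrightarrow>
     s1 = s\<lparr>arrived := insert i (arrived s), lax := (lax s)(i := w), cnt := Suc (cnt s)\<rparr> \<Longrightarrow>
     (if tau s1 < 2 * ceil2 (cnt s1) then
        (let t = 2 * ceil2 (cnt s1) in
          out = {j \<in> act s1. loc s1 j = Big \<and> lax s1 j < t div 2} \<and>
          realloc t (s1\<lparr>tau := t\<rparr>) s2)
      else out = {} \<and> s2 = s1) \<Longrightarrow>
     (if tau s2 \<le> w then
        s' = s2\<lparr>loc := (loc s2)(i := Big), act := insert i (act s2)\<rparr> \<and> inb = {i}
      else
        (\<exists>c. place_choice s2 w c \<and>
           s' = s2\<lparr>loc := (loc s2)(i := c), resv := insert c (resv s2), act := insert i (act s2)\<rparr>)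
        \<and> inb = {}) \<Longrightarrow>
     step s (Arrive i w) s' out inb"
| depart: "i \<in> act s \<Longrightarrow> c = loc s i \<Longrightarrow>
     s1 = s\<lparr>act := act s - {i}, cnt := cnt s - 1\<rparr> \<Longrightarrow>
     (if c = Big then s2 = s1
      else if load s1 c = 0 then s2 = s1\<lparr>resv := resv s1 - {c}\<rparr>
      else if (\<exists>c' j. c' \<noteq> c \<and> nonfull s1 (lax s i) c' \<and> j \<in> act s1 \<and> loc s1 j = c') then
        (\<exists>c' j. c' \<noteq> c \<and> nonfull s1 (lax s i) c' \<and> j \<in> act s1 \<and> loc s1 j = c' \<and>
           s2 = s1\<lparr>loc := (loc s1)(j := c)\<rparr>)
      else s2 = s1) \<Longrightarrow>
     (if 2 * ceil2 (cnt s2) < tau s2 then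
        (let t = 2 * ceil2 (cnt s2);
             moved = {j \<in> act s2. \<exists>w k. loc s2 j = WCh w k \<and> 2 * t < w} in
          inb = moved \<and>
          s' = s2\<lparr>tau := t, loc := (\<lambda>j. if j \<in> moved then Big else loc s2 j),
                  resv := {c \<in> resv s2. \<forall>w k. c = WCh w k \<longrightarrow> w \<le> 2 * t}\<rparr>)
      else inb = {} \<and> s' = s2) \<Longrightarrow>
     step s (Depart i) s' {} inb"

end

theory Submission
  imports Defs
begin

(* Along any run the algorithm keeps three invariants: active clients
   have arrived, a client on a w-channel has laxity w, and tau = 2 * ceil2 n.
   A client j can only sit on the big channel because some earlier step put it
   there; let k' be the last such step.  When j enters the big channel at step k'
   we have 2 * ceil2 n' = tau <= w_j, and its laxity never changes afterwards.
   When j is moved out during the arrival at step k we have w_j < ceil2 n.  Hence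
   the power of two 2 * ceil2 n' lies strictly below ceil2 n, which forces
   2 * ceil2 n' < n and so 2 n' <= n. *)

section \<open>Powers of two\<close>

lemma ceil2_spec: "(\<exists>e. ceil2 x = 2 ^ e) \<and> x \<le> ceil2 x"
  unfolding ceil2_def by (rule LeastI[of _ "2 ^ x"]) auto

lemma ceil2_pow2: "\<exists>e. ceil2 x = 2 ^ e"
  using ceil2_spec by blast

lemma ceil2_ge: "x \<le> ceil2 x"
  using ceil2_spec by blast

lemma ceil2_least: "(\<exists>e. p = 2 ^ e) \<Longrightarrow> x \<le> p \<Longrightarrow> ceil2 x \<le> p"
  unfolding ceil2_def by (rule Least_le) auto

lemma ceil2_mono: "x \<le> y \<Longrightarrow> ceil2 x \<le> ceil2 y"
  using ceil2_pow2[of y] ceil2_ge[of y] by (intro ceil2_least) auto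

lemma ceil2_0: "ceil2 0 = 1"
proof -
  have "ceil2 0 \<le> 1" by (rule ceil2_least) (auto intro: exI[of _ 0])
  moreover obtain e where "ceil2 0 = 2 ^ e" using ceil2_pow2 by blast
  ultimately show ?thesis by (metis le_antisym one_le_numeral one_le_power)
qed

lemma pow2_below_ceil2:
  assumes "\<exists>e. p = 2 ^ e" and "p < ceil2 n"
  shows "p < n"
proof (rule ccontr)
  assume "\<not> p < n"
  then have "ceil2 n \<le> p" using assms(1) by (intro ceil2_least) auto
  with assms(2) show False by simp
qed

lemma doubling:
  assumes "2 * ceil2 n' \<le> L" and "L < ceil2 n"
  shows "2 * n' \<le> n"
proof -
  obtain e where "ceil2 n' = 2 ^ e" using ceil2_pow2 by blast
  then have "\<exists>e. 2 * ceil2 n' = 2 ^ e" by (metis power_Suc)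
  then have "2 * ceil2 n' < n" using assms pow2_below_ceil2 by simp
  then show ?thesis using ceil2_ge[of n'] by linarith
qed

section \<open>Invariants\<close>

definition wchan_lax :: "st \<Rightarrow> bool" where
  "wchan_lax s \<longleftrightarrow> (\<forall>j\<in>act s. \<forall>w k. loc s j = WCh w k \<longrightarrow> lax s j = w)"

definition invariant :: "st \<Rightarrow> bool" where
  "invariant s \<longleftrightarrow> act s \<subseteq> arrived s \<and> wchan_lax s \<and> tau s = 2 * ceil2 (cnt s)"

lemma init_invariant: "init_state s \<Longrightarrow> invariant s"
  unfolding init_state_def invariant_def wchan_lax_def by (simp add: ceil2_0)

lemma place_choice_WCh: "place_choice s w c \<Longrightarrow> \<exists>k. c = WCh w k"
  unfolding place_choice_def nonfull_def by auto

lemma realloc_effect: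
  "realloc t s s' \<Longrightarrow> act s' = act s \<and> arrived s' = arrived s \<and> lax s' = lax s
     \<and> cnt s' = cnt s \<and> tau s' = tau s
     \<and> (\<forall>j. loc s' j = loc s j \<or> (\<exists>k. loc s' j = WCh (lax s j) k))"
proof (induction rule: realloc.induct)
  case (realloc_step j s t c s')
  from place_choice_WCh[OF realloc_step(4)] obtain k where "c = WCh (lax s j) k" by auto
  with realloc_step(6) show ?case by (auto split: if_splits)
qed auto

text \<open>An arrival first updates the threshold (possibly emptying part of the big
  channel into a state s2) and then places the new client i.\<close>
lemma arrive_phases:
  assumes st: "step s (Arrive i w) s' ob b" and inv: "invariant s"
  obtains s2 k where "i \<notin> arrived s" "act s2 = act s" "arrived s2 = insert i (arrived s)"
    "lax s2 = (lax s)(i := w)" "cnt s2 = Suc (cnt s)" "tau s2 = 2 * ceil2 (cnt s2)"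
    "wchan_lax s2" "\<forall>j. loc s2 j = Big \<longrightarrow> loc s j = Big"
    "\<forall>j\<in>ob. j \<in> act s \<and> loc s j = Big \<and> lax s j < ceil2 (cnt s2)"
    "act s' = insert i (act s)" "arrived s' = arrived s2" "lax s' = lax s2"
    "cnt s' = cnt s2" "tau s' = tau s2"
    "loc s' = (loc s2)(i := if tau s2 \<le> w then Big else WCh w k)"
    "b = (if tau s2 \<le> w then {i} else {})"
  using st
proof cases
  case (arrive e s1 s2)
  have i: "i \<notin> act s" using arrive inv unfolding invariant_def by auto
  have wl1: "wchan_lax s1" using inv i arrive unfolding invariant_def wchan_lax_def by auto
  have phase1: "act s2 = act s \<and> arrived s2 = arrived s1 \<and> lax s2 = lax s1 \<and> cnt s2 = cnt s1
      \<and> tau s2 = 2 * ceil2 (cnt s1) \<and> wchan_lax s2 \<and> (\<forall>j. loc s2 j = Big \<longrightarrow> loc s j = Big)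
      \<and> (\<forall>j\<in>ob. j \<in> act s \<and> loc s j = Big \<and> lax s j < ceil2 (cnt s1))"
  proof (cases "tau s1 < 2 * ceil2 (cnt s1)")
    case True
    let ?t = "2 * ceil2 (cnt s1)"
    have r: "realloc ?t (s1\<lparr>tau := ?t\<rparr>) s2"
      and ob: "ob = {j \<in> act s1. loc s1 j = Big \<and> lax s1 j < ?t div 2}"
      using arrive True by (simp_all add: Let_def)
    have eq: "act s2 = act s" "arrived s2 = arrived s1" "lax s2 = lax s1" "cnt s2 = cnt s1"
      "tau s2 = ?t" "\<forall>j. loc s2 j = loc s j \<or> (\<exists>k. loc s2 j = WCh (lax s2 j) k)"
      using realloc_effect[OF r] arrive by auto
    have "\<forall>j. loc s2 j = Big \<longrightarrow> loc s j = Big" using eq(6) by (metis chan.distinct(1))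
    moreover have "wchan_lax s2"
      unfolding wchan_lax_def
    proof (intro ballI allI impI)
      fix j w' k assume j: "j \<in> act s2" "loc s2 j = WCh w' k"
      have s1: "act s1 = act s" "loc s1 = loc s" using arrive by simp_all
      consider "loc s2 j = loc s j" | k' where "loc s2 j = WCh (lax s2 j) k'" using eq(6) by blast
      then show "lax s2 j = w'"
      proof cases
        case 1
        then show ?thesis using wl1 j eq(1,3) s1 unfolding wchan_lax_def by metis
      qed (use j in simp)
    qed
    moreover have "\<forall>j\<in>ob. j \<in> act s \<and> loc s j = Big \<and> lax s j < ceil2 (cnt s1)"
      using ob arrive i by auto
    ultimately show ?thesis using eq by simp
  next
    case False
    have "tau s1 = 2 * ceil2 (cnt s1)"
      using False inv arrive ceil2_mono[of "cnt s" "Suc (cnt s)"] unfolding invariant_def by auto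
    then show ?thesis using False arrive wl1 by auto
  qed
  show ?thesis
  proof (cases "tau s2 \<le> w")
    case True
    then show ?thesis using that[of s2 0] arrive phase1 i by auto
  next
    case False
    then obtain c where c: "place_choice s2 w c"
      "s' = s2\<lparr>loc := (loc s2)(i := c), resv := insert c (resv s2), act := insert i (act s2)\<rparr>"
      "b = {}" using arrive by auto
    obtain k where "c = WCh w k" using place_choice_WCh[OF c(1)] by blast
    then show ?thesis using that[of s2 k] c False arrive phase1 i by auto
  qed
qed

lemma depart_first_phase:
  assumes "i \<in> act s" "c = loc s i" "s1 = s\<lparr>act := act s - {i}, cnt := cnt s - 1\<rparr>"
    and "if c = Big then s2 = s1
      else if load s1 c = 0 then s2 = s1\<lparr>resv := resv s1 - {c}\<rparr>
      else if (\<exists>c' j. c' \<noteq> c \<and> nonfull s1 (lax s i) c' \<and> j \<in> act s1 \<and> loc s1 j = c') then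
        (\<exists>c' j. c' \<noteq> c \<and> nonfull s1 (lax s i) c' \<and> j \<in> act s1 \<and> loc s1 j = c' \<and>
           s2 = s1\<lparr>loc := (loc s1)(j := c)\<rparr>)
      else s2 = s1"
    and wl: "wchan_lax s"
  shows "act s2 = act s - {i} \<and> arrived s2 = arrived s \<and> lax s2 = lax s
    \<and> cnt s2 = cnt s - 1 \<and> tau s2 = tau s \<and> wchan_lax s2
    \<and> (\<forall>j. loc s2 j = Big \<longrightarrow> loc s j = Big)"
proof -
  have wl1: "wchan_lax s1" using wl assms(3) unfolding wchan_lax_def by auto
  consider "s2 = s1" | "s2 = s1\<lparr>resv := resv s1 - {c}\<rparr>"
    | c' j w0 k0 where "c = WCh w0 k0" "nonfull s1 (lax s i) c'" "j \<in> act s1" "loc s1 j = c'"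
      "s2 = s1\<lparr>loc := (loc s1)(j := c)\<rparr>"
    using assms(4) by (cases c) (auto split: if_splits)
  then show ?thesis
  proof cases
    case (3 c' j w0 k0)
    (* the client moved into channel c has the laxity w0 of the departing one *)
    have "lax s i = w0" using wl assms(1,2) 3(1) unfolding wchan_lax_def by metis
    then have "lax s j = w0" using 3 wl assms(3) unfolding wchan_lax_def nonfull_def by auto
    then show ?thesis using 3 wl1 assms(3) unfolding wchan_lax_def by auto
  qed (use wl1 assms(3) in \<open>auto simp: wchan_lax_def\<close>)
qed

text \<open>A departure, seen from outside: after the first phase (state s2) the clients
  b whose w-channels became too slow are moved to the big channel.\<close>
lemma depart_phases:
  assumes st: "step s (Depart i) s' ob b" and inv: "invariant s"
  obtains s2 where "act s2 = act s - {i}" "arrived s2 = arrived s" "lax s2 = lax s"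
    "cnt s2 = cnt s - 1" "wchan_lax s2" "\<forall>j. loc s2 j = Big \<longrightarrow> loc s j = Big"
    "act s' = act s2" "arrived s' = arrived s2" "lax s' = lax s2" "cnt s' = cnt s2"
    "tau s' = 2 * ceil2 (cnt s2)"
    "\<forall>j. loc s' j = (if j \<in> b then Big else loc s2 j)"
    "b \<subseteq> {j \<in> act s2. \<exists>w k. loc s2 j = WCh w k \<and> 2 * tau s' < w}"
  using st
proof cases
  case (depart c s1 s2)
  have phase1: "act s2 = act s - {i} \<and> arrived s2 = arrived s \<and> lax s2 = lax s
    \<and> cnt s2 = cnt s - 1 \<and> tau s2 = tau s \<and> wchan_lax s2
    \<and> (\<forall>j. loc s2 j = Big \<longrightarrow> loc s j = Big)"
    using depart_first_phase[OF depart(2-5)] inv unfolding invariant_def by blast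
  show ?thesis
  proof (cases "2 * ceil2 (cnt s2) < tau s2")
    case True
    then show ?thesis using that[of s2] depart(1,2,6) phase1 by (auto simp: Let_def)
  next
    case False
    have "tau s2 = 2 * ceil2 (cnt s2)"
      using False inv phase1 ceil2_mono[of "cnt s - 1" "cnt s"] unfolding invariant_def by auto
    then show ?thesis using that[of s2] depart(1,2,6) phase1 False by auto
  qed
qed

lemma step_invariant:
  assumes st: "step s e s' ob b" and inv: "invariant s"
  shows "invariant s'"
proof (cases e)
  case (Arrive i w)
  show ?thesis by (rule arrive_phases[OF st[unfolded Arrive] inv])
    (use inv in \<open>auto simp: invariant_def wchan_lax_def split: if_splits\<close>)
next
  case (Depart i)
  show ?thesis by (rule depart_phases[OF st[unfolded Depart] inv])
    (use inv in \<open>auto simp: invariant_def wchan_lax_def split: if_splits\<close>)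
qed

lemma step_big_origin:
  assumes st: "step s e s' ob b" and inv: "invariant s"
    and j: "j \<in> act s'" "loc s' j = Big"
  shows "(j \<in> act s \<and> loc s j = Big) \<or> j \<in> b"
proof (cases e)
  case (Arrive i w)
  show ?thesis by (rule arrive_phases[OF st[unfolded Arrive] inv])
    (use j in \<open>auto split: if_splits\<close>)
next
  case (Depart i)
  show ?thesis by (rule depart_phases[OF st[unfolded Depart] inv]) (use j in auto)
qed

lemma step_entry:
  assumes st: "step s e s' ob b" and inv: "invariant s" and j: "j \<in> b"
  shows "j \<in> act s' \<and> tau s' \<le> lax s' j"
proof (cases e)
  case (Arrive i w)
  show ?thesis by (rule arrive_phases[OF st[unfolded Arrive] inv])
    (use j in \<open>auto split: if_splits\<close>)
next
  case (Depart i)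
  show ?thesis by (rule depart_phases[OF st[unfolded Depart] inv])
    (use j in \<open>fastforce simp: wchan_lax_def\<close>)
qed

lemma step_lax_stable:
  assumes st: "step s e s' ob b" and inv: "invariant s" and x: "x \<in> arrived s"
  shows "x \<in> arrived s' \<and> lax s' x = lax s x"
proof (cases e)
  case (Arrive i w)
  show ?thesis by (rule arrive_phases[OF st[unfolded Arrive] inv]) (use x in auto)
next
  case (Depart i)
  show ?thesis by (rule depart_phases[OF st[unfolded Depart] inv]) (use x in auto)
qed

lemma step_out:
  "step s (Arrive i w) s' ob b \<Longrightarrow> invariant s \<Longrightarrow> j \<in> ob
     \<Longrightarrow> j \<in> act s \<and> loc s j = Big \<and> lax s j < ceil2 (cnt s')"
  by (erule arrive_phases) auto

section \<open>Runs\<close>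

definition run :: "(nat \<Rightarrow> st) \<Rightarrow> (nat \<Rightarrow> event) \<Rightarrow> (nat \<Rightarrow> nat set) \<Rightarrow> (nat \<Rightarrow> nat set)
    \<Rightarrow> nat \<Rightarrow> bool" where
  "run ss es outB inB m \<longleftrightarrow>
     init_state (ss 0) \<and> (\<forall>l<m. step (ss l) (es l) (ss (Suc l)) (outB l) (inB l))"

lemma run_step: "run ss es outB inB m \<Longrightarrow> l < m \<Longrightarrow> step (ss l) (es l) (ss (Suc l)) (outB l) (inB l)"
  unfolding run_def by blast

lemma run_invariant: "run ss es outB inB m \<Longrightarrow> l \<le> m \<Longrightarrow> invariant (ss l)"
proof (induction l)
  case 0
  then show ?case unfolding run_def by (simp add: init_invariant)
next
  case (Suc l)
  then have "l < m" and "invariant (ss l)" by simp_all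
  then show ?case using step_invariant[OF run_step[OF Suc(2)]] by blast
qed

lemma run_big_entered:
  "run ss es outB inB m \<Longrightarrow> l \<le> m \<Longrightarrow> x \<in> act (ss l) \<Longrightarrow> loc (ss l) x = Big
     \<Longrightarrow> \<exists>k'<l. x \<in> inB k'"
proof (induction l)
  case 0
  then show ?case unfolding run_def init_state_def by simp
next
  case (Suc l)
  have "(x \<in> act (ss l) \<and> loc (ss l) x = Big) \<or> x \<in> inB l"
    using step_big_origin[OF run_step[OF Suc(2)] run_invariant[OF Suc(2)]] Suc(3-5) by simp
  then show ?case using Suc by (meson less_SucI lessI Suc_leD)
qed

lemma run_lax_stable:
  assumes "run ss es outB inB m" "a \<le> l" "l \<le> m" "x \<in> arrived (ss a)"
  shows "lax (ss l) x = lax (ss a) x"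
proof -
  have "x \<in> arrived (ss l) \<and> lax (ss l) x = lax (ss a) x"
    using assms(2,3)
  proof (induction l rule: dec_induct)
    case (step q)
    then show ?case
      using step_lax_stable[OF run_step[OF assms(1)] run_invariant[OF assms(1)]] by fastforce
  qed (use assms(4) in simp)
  then show ?thesis by simp
qed

lemma last_below:
  fixes k :: nat
  assumes "\<exists>k'<k. P k'"
  shows "\<exists>k'<k. P k' \<and> (\<forall>l. k' < l \<and> l < k \<longrightarrow> \<not> P l)"
proof -
  let ?K = "Max {k'. k' < k \<and> P k'}"
  have "?K \<in> {k'. k' < k \<and> P k'}" using assms by (intro Max_in) auto
  moreover have "\<forall>l. ?K < l \<and> l < k \<longrightarrow> \<not> P l"
    using Max_ge[of "{k'. k' < k \<and> P k'}"] by fastforce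
  ultimately show ?thesis by blast
qed

theorem lemma1:
  fixes ss :: "nat \<Rightarrow> st" and es :: "nat \<Rightarrow> event"
    and outB inB :: "nat \<Rightarrow> nat set" and m k j :: nat
  assumes "init_state (ss 0)"
    and "\<forall>l<m. step (ss l) (es l) (ss (Suc l)) (outB l) (inB l)"
    and "k < m"
    and "\<exists>i w. es k = Arrive i w"
    and "j \<in> outB k"
  shows "\<exists>k'<k. j \<in> inB k' \<and> (\<forall>l. k' < l \<and> l < k \<longrightarrow> j \<notin> inB l)
           \<and> 2 * cnt (ss (Suc k')) \<le> cnt (ss (Suc k))"
proof -
  have R: "run ss es outB inB m" using assms(1,2) unfolding run_def by blast
  obtain i w where "es k = Arrive i w" using assms(4) by blast
  then have step_k: "step (ss k) (Arrive i w) (ss (Suc k)) (outB k) (inB k)"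
    using run_step[OF R assms(3)] by simp
  have "invariant (ss k)" using run_invariant[OF R] assms(3) by simp
  from step_out[OF step_k this assms(5)]
  have out: "j \<in> act (ss k)" "loc (ss k) j = Big" "lax (ss k) j < ceil2 (cnt (ss (Suc k)))"
    by simp_all
  have "\<exists>k'<k. j \<in> inB k'" using run_big_entered[OF R _ out(1,2)] assms(3) by simp
  then obtain K where K: "K < k" "j \<in> inB K" "\<forall>l. K < l \<and> l < k \<longrightarrow> j \<notin> inB l"
    using last_below[of k "\<lambda>k'. j \<in> inB k'"] by blast
  have "K < m" using K(1) assms(3) by simp
  then have inv: "invariant (ss K)" "invariant (ss (Suc K))" using run_invariant[OF R] by simp_all
  have entry: "j \<in> act (ss (Suc K))" "tau (ss (Suc K)) \<le> lax (ss (Suc K)) j"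
    using step_entry[OF run_step[OF R \<open>K < m\<close>] inv(1) K(2)] by simp_all
  have "j \<in> arrived (ss (Suc K))" using entry(1) inv(2) unfolding invariant_def by blast
  then have "lax (ss k) j = lax (ss (Suc K)) j"
    using run_lax_stable[OF R, of "Suc K" k] K(1) assms(3) by simp
  then have "2 * ceil2 (cnt (ss (Suc K))) \<le> lax (ss k) j"
    using entry(2) inv(2) unfolding invariant_def by simp
  then show ?thesis using K doubling[OF _ out(3)] by blast
qed

end
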